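(* Let $n\ge27$, $\mathcal{X},\mathcal{Y}$ finite with $|\mathcal{X}|,|\mathcal{Y}|\ge2$, and $\mathbf{X}$ a random vector on $\mathcal{X}^n$. Let $w,\tilde w\in\mathcal{P}(\mathcal{Y}|\mathcal{X})$. For every discrete random variable $U$ such that $U,\mathbf{X}$ are jointly distributed (with channel outputs generated from $\mathbf{X}$ alone), every $u$ in the support of $U$, and every $\mathbf{y}\in\mathcal{Y}^n$ with $\tilde w_n(\mathbf{y}|u)>0$, $$\log_2\frac{w_n(\mathbf{y}|u)}{\tilde w_n(\mathbf{y}|u)}\le n\sup_{\hat w\in\mathcal{P}(\mathcal{Y}|\mathcal{X}),\ \hat p\in\mathcal{P}(\mathcal{X})}\mathbb{D}_{\hat w}(w\|\tilde w|\hat p)+2|\mathcal{X}||\mathcal{Y}|\log_2 n.$$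
   Context: $\mathcal{P}(\mathcal{Y}|\mathcal{X})$ is the set of conditional distributions from $\mathcal{X}$ to $\mathcal{Y}$ and $\mathcal{P}(\mathcal{X})$ the set of distributions on $\mathcal{X}$. $w_n(\mathbf{y}|u)=\sum_{\mathbf{x}}w^n(\mathbf{y}|\mathbf{x})p_{\mathbf{X}|U}(\mathbf{x}|u)$ with $w^n(\mathbf{y}|\mathbf{x})=\prod_t w(y_t|x_t)$, and similarly $\tilde w_n$. $\mathbb{D}_{\hat w}(w\|\tilde w|\hat p)=\sum_{y,x}\hat w(y|x)\hat p(x)\log_2\frac{w(y|x)}{\tilde w(y|x)}$. *)

theory Defs
  imports "HOL-Probability.Probability"
begin

text \<open>Conditional distributions from 'x to 'y (channels), as w x y = w(y|x).\<close>
definition cond_dists :: "('x::finite \<Rightarrow> 'y::finite \<Rightarrow> real) set" where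
  "cond_dists = {w. (\<forall>x y. 0 \<le> w x y) \<and> (\<forall>x. (\<Sum>y\<in>UNIV. w x y) = 1)}"

definition dists :: "('x::finite \<Rightarrow> real) set" where
  "dists = {p. (\<forall>x. 0 \<le> p x) \<and> (\<Sum>x\<in>UNIV. p x) = 1}"

definition llr :: "real \<Rightarrow> real \<Rightarrow> ereal" where
  "llr a b = (if 0 < a \<and> 0 < b then ereal (log 2 (a / b))
              else if 0 < a then \<infinity> else if 0 < b then -\<infinity> else 0)"

definition prod_chan :: "('x \<Rightarrow> 'y \<Rightarrow> real) \<Rightarrow> nat \<Rightarrow> 'x list \<Rightarrow> 'y list \<Rightarrow> real" where
  "prod_chan w n xs ys = (\<Prod>t<n. w (xs ! t) (ys ! t))"

definition cond_pmf :: "('u \<times> 'x list) pmf \<Rightarrow> 'u \<Rightarrow> 'x list \<Rightarrow> real" where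
  "cond_pmf P u xs = pmf P (u, xs) / pmf (map_pmf fst P) u"

definition chan_n :: "('x::finite \<Rightarrow> 'y \<Rightarrow> real) \<Rightarrow> nat \<Rightarrow> ('u \<times> 'x list) pmf \<Rightarrow> 'u \<Rightarrow> 'y list \<Rightarrow> real" where
  "chan_n w n P u ys = (\<Sum>xs\<in>{xs. length xs = n}. prod_chan w n xs ys * cond_pmf P u xs)"

text \<open>D_{what}(w || wt | phat) = sum_{y,x} what(y|x) phat(x) log2 (w(y|x)/wt(y|x)),
  with the convention 0 * (+-inf) = 0.\<close>
definition cond_div :: "('x::finite \<Rightarrow> 'y::finite \<Rightarrow> real) \<Rightarrow> ('x \<Rightarrow> 'y \<Rightarrow> real) \<Rightarrow>
    ('x \<Rightarrow> 'y \<Rightarrow> real) \<Rightarrow> ('x \<Rightarrow> real) \<Rightarrow> ereal" where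
  "cond_div what w wt phat = (\<Sum>y\<in>UNIV. \<Sum>x\<in>UNIV. ereal (what x y * phat x) * llr (w x y) (wt x y))"

end

theory Submission
  imports Defs
begin

text \<open>Choosing point masses for \<open>what\<close> and \<open>phat\<close> shows that the supremum \<open>S\<close> dominates every
  single-letter ratio \<open>llr (w x y) (wt x y)\<close>. Hence either \<open>S = \<infinity>\<close>, or \<open>w \<le> 2 powr S * wt\<close>
  letterwise; the latter multiplies out to \<open>w\<^sub>n(y|u) \<le> 2 powr (n * S) * wt\<^sub>n(y|u)\<close>, so the bound
  holds even without the correction term \<open>2 |X| |Y| log\<^sub>2 n\<close> and without the hypotheses on
  the alphabet sizes and on \<open>P\<close>.\<close>

lemma cond_div_point_masses:
  fixes w wt :: "'x::finite \<Rightarrow> 'y::finite \<Rightarrow> real"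
  shows "cond_div (\<lambda>_ y'. if y' = y then 1 else 0) w wt (\<lambda>x'. if x' = x then 1 else 0)
         = llr (w x y) (wt x y)"
proof -
  have "cond_div (\<lambda>_ y'. if y' = y then 1 else 0) w wt (\<lambda>x'. if x' = x then 1 else 0)
        = (\<Sum>y'\<in>UNIV. \<Sum>x'\<in>UNIV. if y' = y then if x' = x then llr (w x y) (wt x y) else 0 else 0)"
    unfolding cond_div_def
    by (intro sum.cong refl) (auto simp: zero_ereal_def[symmetric] one_ereal_def[symmetric])
  also have "\<dots> = llr (w x y) (wt x y)"
    by (subst sum.swap) (simp add: sum.delta)
  finally show ?thesis .
qed

lemma llr_le_SUP_cond_div:
  fixes w wt :: "'x::finite \<Rightarrow> 'y::finite \<Rightarrow> real"
  shows "llr (w x y) (wt x y) \<le> (SUP (what, phat) \<in> cond_dists \<times> dists. cond_div what w wt phat)"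
proof -
  have "((\<lambda>_ y'. if y' = y then 1 else 0), (\<lambda>x'. if x' = x then 1 else 0)) \<in> cond_dists \<times> dists"
    unfolding cond_dists_def dists_def by simp
  then show ?thesis
    by (subst cond_div_point_masses[symmetric]) (rule SUP_upper2, auto)
qed

lemma cond_dists_ex_pos:
  assumes "w \<in> cond_dists"
  shows "\<exists>y. 0 < w x y"
proof (rule ccontr)
  assume "\<nexists>y. 0 < w x y"
  with assms have "\<forall>y. w x y = 0"
    unfolding cond_dists_def by (force simp: not_less intro: order.antisym)
  then have "(\<Sum>y\<in>UNIV. w x y) = 0"
    by simp
  with assms show False
    unfolding cond_dists_def by simp
qed

lemma llr_pos_neq_minf: "0 < a \<Longrightarrow> llr a b \<noteq> -\<infinity>"
  unfolding llr_def by auto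

lemma le_powr_mult_if_llr_le:
  assumes "0 \<le> a" "0 \<le> b" "llr a b \<le> ereal s"
  shows "a \<le> 2 powr s * b"
proof (cases "0 < a")
  case True
  with assms have "0 < b"
    unfolding llr_def by (cases "0 < b") auto
  with True assms(3) have "log 2 (a / b) \<le> s"
    unfolding llr_def by simp
  with True \<open>0 < b\<close> have "a / b \<le> 2 powr s"
    by (simp add: le_powr_iff)
  with \<open>0 < b\<close> show ?thesis
    by (simp add: divide_le_eq mult.commute)
next
  case False
  with assms(1,2) show ?thesis
    by simp
qed

lemma llr_le_log_if_le_mult:
  assumes "0 < b" "0 < c" "a \<le> c * b"
  shows "llr a b \<le> ereal (log 2 c)"
proof (cases "0 < a")
  case True
  from assms have "a / b \<le> c"
    by (simp add: divide_le_eq mult.commute)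
  with True assms(1) have "log 2 (a / b) \<le> log 2 c"
    by (intro log_mono) auto
  with True assms(1) show ?thesis
    unfolding llr_def by simp
next
  case False
  with assms(1) show ?thesis
    unfolding llr_def by simp
qed

lemma prod_chan_le_pow_mult:
  assumes "\<And>x y. 0 \<le> w x y" "\<And>x y. w x y \<le> c * wt x y"
  shows "prod_chan w n xs ys \<le> c ^ n * prod_chan wt n xs ys"
proof -
  have "prod_chan w n xs ys \<le> (\<Prod>t<n. c * wt (xs ! t) (ys ! t))"
    unfolding prod_chan_def by (rule prod_mono) (use assms in auto)
  also have "\<dots> = c ^ n * prod_chan wt n xs ys"
    unfolding prod_chan_def by (simp add: prod.distrib)
  finally show ?thesis .
qed

lemma chan_n_le_pow_mult:
  assumes "\<And>x y. 0 \<le> w x y" "\<And>x y. w x y \<le> c * wt x y"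
  shows "chan_n w n P u ys \<le> c ^ n * chan_n wt n P u ys"
proof -
  have "chan_n w n P u ys
        \<le> (\<Sum>xs\<in>{xs. length xs = n}. c ^ n * prod_chan wt n xs ys * cond_pmf P u xs)"
    unfolding chan_n_def cond_pmf_def
    by (intro sum_mono mult_right_mono prod_chan_le_pow_mult assms) simp
  also have "\<dots> = c ^ n * chan_n wt n P u ys"
    unfolding chan_n_def by (simp add: sum_distrib_left mult.assoc)
  finally show ?thesis .
qed

theorem lemma31:
  fixes n :: nat
    and w wt :: "'x::finite \<Rightarrow> 'y::finite \<Rightarrow> real"
    and P :: "('u \<times> 'x list) pmf"
    and u :: 'u
    and ys :: "'y list"
  assumes "n \<ge> 27"
    and "CARD('x) \<ge> 2" and "CARD('y) \<ge> 2"
    and "w \<in> cond_dists" and "wt \<in> cond_dists"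
    and "\<forall>p\<in>set_pmf P. length (snd p) = n"
    and "u \<in> set_pmf (map_pmf fst P)"
    and "length ys = n"
    and "chan_n wt n P u ys > 0"
  shows "llr (chan_n w n P u ys) (chan_n wt n P u ys)
         \<le> ereal (real n) * (SUP (what, phat) \<in> cond_dists \<times> dists. cond_div what w wt phat)
           + ereal (2 * real CARD('x) * real CARD('y) * log 2 (real n))"
proof -
  define S where "S = (SUP (what, phat) \<in> cond_dists \<times> dists. cond_div what w wt phat)"
  have letter_le_S: "llr (w x y) (wt x y) \<le> S" for x y
    unfolding S_def by (rule llr_le_SUP_cond_div)
  have nonneg: "0 \<le> w x y" "0 \<le> wt x y" for x y
    using assms(4,5) unfolding cond_dists_def by auto
  have log_n: "0 \<le> 2 * real CARD('x) * real CARD('y) * log 2 (real n)"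
    using assms(1) by simp
  obtain x y where "0 < w x y"
    using cond_dists_ex_pos[OF assms(4)] by blast
  with letter_le_S[of x y] have "S \<noteq> -\<infinity>"
    using llr_pos_neq_minf by force
  then consider (infinite) "S = \<infinity>" | (finite) s where "S = ereal s"
    by (cases S) auto
  then show ?thesis
  proof cases
    case infinite
    with assms(1) show ?thesis
      unfolding S_def[symmetric] by simp
  next
    case finite
    have "chan_n w n P u ys \<le> (2 powr s) ^ n * chan_n wt n P u ys"
      using nonneg letter_le_S finite by (intro chan_n_le_pow_mult le_powr_mult_if_llr_le) auto
    then have "llr (chan_n w n P u ys) (chan_n wt n P u ys) \<le> ereal (log 2 ((2 powr s) ^ n))"
      using assms(9) by (intro llr_le_log_if_le_mult) auto
    also have "\<dots> \<le> ereal (real n) * S + ereal (2 * real CARD('x) * real CARD('y) * log 2 (real n))"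
      using finite log_n by (simp add: log_nat_power)
    finally show ?thesis
      unfolding S_def .
  qed
qed

end
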